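(* Let $m,n$ be positive integers and let $U=\begin{pmatrix} A & B\\ C & D\end{pmatrix}$ be an $(m+n)\times(m+n)$ unitary matrix decomposed with respect to $\mathbb C^m\oplus\mathbb C^n$. Let $\Psi(z)=A+zB(I-zD)^{-1}C$ and $\Psi'(w)=D^*+wB^*(I-wA^* )^{-1}C^*$. Then $$\{(z,w)\in\mathbb D^2:\det(\Psi(z)-wI)=0\}=\{(z,w)\in\mathbb D^2:\det(\Psi'(w)-zI)=0\}=\left\{(z,w)\in\mathbb D^2:\det\begin{pmatrix} A-wI & zB\\ C & zD-I\end{pmatrix}=0\right\},$$ and this set $V$, if non-empty, is a distinguished variety.
   Context: $\mathbb D$ is the open unit disk and $\mathbb D^2$ the open bidisk. A non-empty set $V\subseteq\mathbb C^2$ is a distinguished variety if there is a polynomial $p\in\mathbb C[z,w]$ with $V=\{(z,w)\in\mathbb D^2: p(z,w)=0\}$ and $\overline V\cap\partial(\mathbb D^2)=\overline V\cap(\partial\mathbb D)^2$, where $\partial\mathbb D$ is the unit circle. *)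

theory Defs
  imports "HOL-Analysis.Analysis" "HOL-Computational_Algebra.Polynomial"
begin

definition cadj :: "complex^'n^'m \<Rightarrow> complex^'m^'n" where
  "cadj M = (\<chi> i j. cnj (M $ j $ i))"

definition unitary :: "complex^'n^'n \<Rightarrow> bool" where
  "unitary U \<longleftrightarrow> U ** cadj U = mat 1 \<and> cadj U ** U = mat 1"

definition blkA :: "'a^('m::finite+'n::finite)^('m+'n) \<Rightarrow> 'a^'m^'m" where
  "blkA U = (\<chi> i j. U $ Inl i $ Inl j)"
definition blkB :: "'a^('m::finite+'n::finite)^('m+'n) \<Rightarrow> 'a^'n^'m" where
  "blkB U = (\<chi> i j. U $ Inl i $ Inr j)"
definition blkC :: "'a^('m::finite+'n::finite)^('m+'n) \<Rightarrow> 'a^'m^'n" where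
  "blkC U = (\<chi> i j. U $ Inr i $ Inl j)"
definition blkD :: "'a^('m::finite+'n::finite)^('m+'n) \<Rightarrow> 'a^'n^'n" where
  "blkD U = (\<chi> i j. U $ Inr i $ Inr j)"

definition block :: "'a^'m::finite^'m \<Rightarrow> 'a^'n^'m \<Rightarrow> 'a^'m^'n \<Rightarrow> 'a^'n::finite^'n \<Rightarrow> 'a^('m+'n)^('m+'n)" where
  "block P Q R S = (\<chi> i j. case i of
       Inl a \<Rightarrow> (case j of Inl b \<Rightarrow> P $ a $ b | Inr b \<Rightarrow> Q $ a $ b)
     | Inr a \<Rightarrow> (case j of Inl b \<Rightarrow> R $ a $ b | Inr b \<Rightarrow> S $ a $ b))"

text \<open>Bivariate polynomials in C[z,w] represented as polynomials in w whose
  coefficients are polynomials in z.\<close>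
definition poly2 :: "complex poly poly \<Rightarrow> complex \<Rightarrow> complex \<Rightarrow> complex" where
  "poly2 p z w = poly (map_poly (\<lambda>c. poly c z) p) w"

abbreviation bidisk :: "(complex \<times> complex) set" where
  "bidisk \<equiv> ball 0 1 \<times> ball 0 1"

definition distinguished_variety :: "(complex \<times> complex) set \<Rightarrow> bool" where
  "distinguished_variety V \<longleftrightarrow> V \<noteq> {} \<and>
     (\<exists>p :: complex poly poly. V = {(z, w). (z, w) \<in> bidisk \<and> poly2 p z w = 0}) \<and>
     closure V \<inter> frontier bidisk = closure V \<inter> (sphere 0 1 \<times> sphere 0 1)"

end

theory Submission
  imports Defs
begin

(* Write U = [[A, B], [C, D]]. For (z, w) in the bidisk each of the three determinants vanishes
   exactly when U (x, z y) = (w x, y) for some nonzero (x, y): for Psi by a Schur complement,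
   I - z D being invertible because D is a contraction; for the block matrix directly; and Psi'
   is the Psi of the unitary [[D^*, B^*], [C^*, A^*]], whose solutions are those of U with x, y
   and z, w exchanged.
   Unitarity gives (1 - |w|^2) |x|^2 = (1 - |z|^2) |y|^2 for every solution. If points of V tend
   to (z0, w0) with |z0| < 1 = |w0|, normalised solutions converge along a subsequence to a unit
   vector (l, 0) with U (l, 0) = w0 (l, 0). Since w0 is unimodular, (l, 0) is also an eigenvector
   of U^*, which makes x orthogonal to l in every solution at a point with w <> w0, contradicting
   the convergence to l. The case |w0| < 1 = |z0| is the same argument for the dual matrix. *)

definition join :: "'a^'m::finite \<Rightarrow> 'a^'n::finite \<Rightarrow> 'a^('m + 'n)" where
  "join x y = (\<chi> i. case i of Inl a \<Rightarrow> x $ a | Inr b \<Rightarrow> y $ b)"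

lemma join_nth [simp]: "join x y $ Inl a = x $ a" "join x y $ Inr b = y $ b"
  by (simp_all add: join_def)

lemma join_eq_iff [simp]: "join x y = join x' y' \<longleftrightarrow> x = x' \<and> y = y'"
  by (metis (no_types, lifting) join_nth vec_eq_iff)

lemma join_eq_0_iff [simp]: "join x y = 0 \<longleftrightarrow> x = 0 \<and> y = 0"
  by (auto simp: vec_eq_iff join_def split: sum.split)

lemma join_cases: obtains x y where "v = join x y"
proof
  show "v = join (\<chi> a. v $ Inl a) (\<chi> b. v $ Inr b)"
    by (simp add: vec_eq_iff join_def split: sum.split)
qed

lemma join_smult: "c *s join x y = join (c *s x) (c *s y)"
  by (simp add: vec_eq_iff join_def split: sum.split)

lemma sum_UNIV_Plus:
  "(\<Sum>i\<in>(UNIV :: ('m::finite + 'n::finite) set). f i) = (\<Sum>a\<in>UNIV. f (Inl a)) + (\<Sum>b\<in>UNIV. f (Inr b))"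
proof -
  have "sum f (UNIV <+> UNIV) = sum (f \<circ> Inl) UNIV + sum (f \<circ> Inr) UNIV"
    by (rule sum.Plus) auto
  then show ?thesis
    by (simp add: comp_def)
qed

lemma matrix_vector_mult_join:
  "M *v join x y = join (blkA M *v x + blkB M *v y) (blkC M *v x + blkD M *v y)"
  by (simp add: vec_eq_iff matrix_vector_mult_def sum_UNIV_Plus blkA_def blkB_def blkC_def blkD_def
      join_def split: sum.split)

lemma norm_join: "norm (join x y) = norm (x, y)"
  by (simp add: norm_Pair norm_vec_def L2_set_def sum_UNIV_Plus sum_nonneg)

lemma tendsto_join [tendsto_intros]:
  "(f \<longlongrightarrow> x) F \<Longrightarrow> (g \<longlongrightarrow> y) F \<Longrightarrow> ((\<lambda>k. join (f k) (g k)) \<longlongrightarrow> join x y) F"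
  by (rule vec_tendstoI) (auto simp: join_def intro: tendsto_vec_nth split: sum.split)

lemma mat_mult_nth: "(mat c ** M) $ i $ j = c * (M :: 'a::semiring_1^_^_) $ i $ j"
  unfolding matrix_matrix_mult_def mat_def
  by (auto simp: if_distrib if_distribR sum.delta'[OF finite] cong: if_cong)

lemma mat_mult_vector: "(mat c ** M) *v x = c *s (M *v (x :: 'a::comm_semiring_1^_))"
  by (simp add: vec_eq_iff matrix_vector_mult_def mat_mult_nth sum_distrib_left mult.assoc)

lemma mat_vector: "mat c *v x = c *s (x :: 'a::comm_semiring_1^_)"
  using mat_mult_vector[of c "mat 1" x] by simp

lemma matrix_vector_mult_smult: "M *v (c *s x) = c *s (M *v (x :: 'a::comm_semiring_1^_))"
  by (simp add: vec_eq_iff matrix_vector_mult_def sum_distrib_left mult.left_commute)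

lemma vector_smult_commute: "a *s (b *s x) = b *s (a *s (x :: 'a::comm_semiring_1^_))"
  by (simp add: mult.commute)

lemma norm_vector_smult: "norm (c *s x) = norm c * norm (x :: 'a::real_normed_field^_)"
  by (simp add: norm_vec_def norm_mult L2_set_right_distrib)

lemma det_eq_0_iff_ker: "det (M :: 'a::field^'n^'n) = 0 \<longleftrightarrow> (\<exists>x. x \<noteq> 0 \<and> M *v x = 0)"
  by (metis invertible_det_nz invertible_left_inverse matrix_left_invertible_ker)

lemma matrix_inv_cancel:
  assumes "invertible M"
  shows "M ** matrix_inv M = mat 1" "matrix_inv M ** M = mat 1"
  using someI_ex[OF assms[unfolded invertible_def]] by (simp_all add: matrix_inv_def)

lemma matrix_vector_eq_iff_matrix_inv:
  assumes "invertible M"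
  shows "M *v y = r \<longleftrightarrow> y = matrix_inv M *v r"
proof
  assume "M *v y = r"
  then have "matrix_inv M *v (M *v y) = matrix_inv M *v r"
    by simp
  then show "y = matrix_inv M *v r"
    by (simp add: matrix_vector_mul_assoc matrix_inv_cancel[OF assms])
qed (simp add: matrix_vector_mul_assoc matrix_inv_cancel[OF assms])

lemma invertible_one_minus_contraction:
  fixes X :: "'a::real_normed_field^'n^'n"
  assumes contraction: "\<And>v. norm (X *v v) \<le> norm v" and "norm z < 1"
  shows "invertible (mat 1 - mat z ** X)"
proof -
  have "v = 0" if "(mat 1 - mat z ** X) *v v = 0" for v
  proof -
    have "v = z *s (X *v v)"
      using that by (simp add: matrix_vector_mult_diff_rdistrib mat_mult_vector)
    then have "norm v \<le> norm z * norm v"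
      using contraction[of v] by (metis norm_vector_smult mult_left_mono norm_ge_zero)
    then have "\<not> 0 < norm v"
      using \<open>norm z < 1\<close> by (auto simp: mult_le_cancel_right1)
    then show "v = 0"
      by simp
  qed
  then show ?thesis
    by (metis det_eq_0_iff_ker invertible_det_nz)
qed

lemma det_schur_complement_eq_0_iff:
  fixes P :: "'a::field^'m^'m" and Q :: "'a^'n^'m" and R :: "'a^'m^'n" and S :: "'a^'n^'n"
  assumes "invertible (mat 1 - mat a ** S)"
  shows "det (P + mat a ** Q ** matrix_inv (mat 1 - mat a ** S) ** R - mat b) = 0 \<longleftrightarrow>
    (\<exists>x y. (x \<noteq> 0 \<or> y \<noteq> 0) \<and> P *v x + a *s (Q *v y) = b *s x \<and> R *v x + a *s (S *v y) = y)"
proof -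
  let ?M = "mat 1 - mat a ** S"
  let ?N = "matrix_inv ?M"
  have second_eq_iff: "R *v x + a *s (S *v y) = y \<longleftrightarrow> y = ?N *v (R *v x)" for x y
  proof -
    have "R *v x + a *s (S *v y) = y \<longleftrightarrow> ?M *v y = R *v x"
      by (auto simp: matrix_vector_mult_diff_rdistrib mat_mult_vector diff_eq_eq)
    also have "\<dots> \<longleftrightarrow> y = ?N *v (R *v x)"
      by (rule matrix_vector_eq_iff_matrix_inv[OF assms])
    finally show ?thesis .
  qed
  have "(P + mat a ** Q ** ?N ** R - mat b) *v x = P *v x + a *s (Q *v (?N *v (R *v x))) - b *s x"
    for x
    by (simp add: matrix_vector_mult_diff_rdistrib matrix_vector_mult_add_rdistrib
        matrix_vector_mul_assoc[symmetric] mat_mult_vector mat_vector)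
  then have "det (P + mat a ** Q ** ?N ** R - mat b) = 0 \<longleftrightarrow>
      (\<exists>x. x \<noteq> 0 \<and> P *v x + a *s (Q *v (?N *v (R *v x))) = b *s x)"
    by (simp add: det_eq_0_iff_ker)
  also have "\<dots> \<longleftrightarrow>
      (\<exists>x y. (x \<noteq> 0 \<or> y \<noteq> 0) \<and> P *v x + a *s (Q *v y) = b *s x \<and> R *v x + a *s (S *v y) = y)"
    unfolding second_eq_iff by auto
  finally show ?thesis .
qed

lemma blk_block [simp]:
  "blkA (block P Q R S) = P" "blkB (block P Q R S) = Q"
  "blkC (block P Q R S) = R" "blkD (block P Q R S) = S"
  by (simp_all add: vec_eq_iff blkA_def blkB_def blkC_def blkD_def block_def)

lemma blk_cadj:
  "blkA (cadj M) = cadj (blkA M)" "blkB (cadj M) = cadj (blkC M)"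
  "blkC (cadj M) = cadj (blkB M)" "blkD (cadj M) = cadj (blkD M)"
  by (simp_all add: vec_eq_iff blkA_def blkB_def blkC_def blkD_def cadj_def)

definition cinner :: "complex^'n \<Rightarrow> complex^'n \<Rightarrow> complex" where
  "cinner x y = (\<Sum>i\<in>UNIV. x $ i * cnj (y $ i))"

lemma cinner_adjoint: "cinner (M *v x) y = cinner x (cadj M *v y)"
proof -
  have "cinner (M *v x) y = (\<Sum>i\<in>UNIV. \<Sum>j\<in>UNIV. M $ i $ j * x $ j * cnj (y $ i))"
    by (simp add: cinner_def matrix_vector_mult_def sum_distrib_right)
  also have "\<dots> = (\<Sum>j\<in>UNIV. \<Sum>i\<in>UNIV. M $ i $ j * x $ j * cnj (y $ i))"
    by (rule sum.swap)
  also have "\<dots> = cinner x (cadj M *v y)"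
    by (simp add: cinner_def matrix_vector_mult_def cadj_def sum_distrib_left algebra_simps)
  finally show ?thesis .
qed

lemma cinner_self: "cinner x x = of_real ((norm x)\<^sup>2)"
  by (simp add: cinner_def norm_vec_def L2_set_def sum_nonneg complex_norm_square[symmetric])

lemma cinner_join: "cinner (join x y) (join x' y') = cinner x x' + cinner y y'"
  by (simp add: cinner_def sum_UNIV_Plus)

lemma cinner_smult_left: "cinner (c *s x) y = c * cinner x y"
  and cinner_smult_right: "cinner x (c *s y) = cnj c * cinner x y"
  and cinner_zero_right [simp]: "cinner x 0 = 0"
  by (simp_all add: cinner_def sum_distrib_left algebra_simps)

lemma unitary_mult_eq_iff: "unitary U \<Longrightarrow> U *v x = y \<longleftrightarrow> cadj U *v y = x"
  by (auto simp: unitary_def matrix_vector_mul_assoc)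

lemma unitary_norm:
  assumes "unitary U"
  shows "norm (U *v x) = norm x"
proof -
  have "cinner (U *v x) (U *v x) = cinner x x"
    using assms by (simp add: cinner_adjoint matrix_vector_mul_assoc unitary_def)
  then have "(norm (U *v x))\<^sup>2 = (norm x)\<^sup>2"
    by (metis cinner_self of_real_eq_iff)
  then show ?thesis
    by (metis norm_ge_zero power2_eq_iff_nonneg)
qed

lemma unitary_cinner_eigenvector:
  assumes "unitary U" "U *v l = c *s l" "cmod c = 1"
  shows "cinner (U *v x) l = c * cinner x l"
proof -
  have "cadj U *v (c *s l) = l"
    using assms(1,2) unitary_mult_eq_iff by blast
  then have "cnj c *s l = (cnj c * c) *s (cadj U *v l)"
    by (metis matrix_vector_mult_smult vector_smult_assoc)
  also have "cnj c * c = 1"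
    using \<open>cmod c = 1\<close> by (metis complex_norm_square mult.commute of_real_1 power_one)
  finally have "cadj U *v l = cnj c *s l"
    by simp
  then show ?thesis
    by (simp add: cinner_adjoint cinner_smult_right)
qed

lemma unitary_blkD_contraction:
  fixes U :: "complex^('m::finite + 'n::finite)^('m + 'n)"
  assumes "unitary U"
  shows "norm (blkD U *v y) \<le> norm y"
proof -
  have "norm (blkD U *v y) \<le> norm (blkB U *v y, blkD U *v y)"
    by (metis norm_snd_le)
  also have "\<dots> = norm (0 :: complex^'m, y)"
    using unitary_norm[OF assms, of "join 0 y"] by (simp add: matrix_vector_mult_join norm_join)
  also have "\<dots> = norm y"
    by (simp add: norm_Pair)
  finally show ?thesis .
qed

definition kernel_point ::
    "complex^('m::finite + 'n::finite)^('m + 'n) \<Rightarrow> complex \<Rightarrow> complex \<Rightarrow> bool" where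
  "kernel_point U z w \<longleftrightarrow> (\<exists>x y. (x \<noteq> 0 \<or> y \<noteq> 0) \<and> U *v join x (z *s y) = join (w *s x) y)"

lemma kernel_point_iff_blocks:
  "kernel_point U z w \<longleftrightarrow> (\<exists>x y. (x \<noteq> 0 \<or> y \<noteq> 0) \<and>
     blkA U *v x + z *s (blkB U *v y) = w *s x \<and> blkC U *v x + z *s (blkD U *v y) = y)"
  by (simp add: kernel_point_def matrix_vector_mult_join matrix_vector_mult_smult)

lemma det_transfer_function_eq_0_iff:
  assumes "unitary U" "cmod z < 1"
  shows "det (blkA U + mat z ** blkB U ** matrix_inv (mat 1 - mat z ** blkD U) ** blkC U - mat w)
      = 0 \<longleftrightarrow> kernel_point U z w"
  using invertible_one_minus_contraction[OF unitary_blkD_contraction[OF assms(1)] assms(2)]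
  by (simp add: det_schur_complement_eq_0_iff kernel_point_iff_blocks)

lemma ex_join_iff: "(\<exists>v. P v) \<longleftrightarrow> (\<exists>x y. P (join x y))"
  by (metis join_cases)

lemma det_pencil_eq_0_iff:
  "det (block (blkA U - mat w) (mat z ** blkB U) (blkC U) (mat z ** blkD U - mat 1)) = 0
    \<longleftrightarrow> kernel_point U z w"
  unfolding det_eq_0_iff_ker kernel_point_iff_blocks ex_join_iff[where P = "\<lambda>v. v \<noteq> 0 \<and> _ v"]
  by (simp add: matrix_vector_mult_join matrix_vector_mult_diff_rdistrib mat_mult_vector mat_vector
      diff_add_eq add_diff_eq)

definition dual :: "complex^('m::finite + 'n::finite)^('m + 'n) \<Rightarrow> complex^('n + 'm)^('n + 'm)" where
  "dual U = block (cadj (blkD U)) (cadj (blkB U)) (cadj (blkC U)) (cadj (blkA U))"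

lemma blk_dual:
  "blkA (dual U) = cadj (blkD U)" "blkB (dual U) = cadj (blkB U)"
  "blkC (dual U) = cadj (blkC U)" "blkD (dual U) = cadj (blkA U)"
  by (simp_all add: dual_def)

lemma dual_nth: "dual U $ i $ j = cnj (U $ case_sum Inr Inl j $ case_sum Inr Inl i)"
  by (simp add: dual_def block_def cadj_def blkA_def blkB_def blkC_def blkD_def split: sum.split)

lemma sum_UNIV_Plus_swap:
  "(\<Sum>k\<in>UNIV. f (case_sum Inr Inl k)) = (\<Sum>k\<in>(UNIV :: ('m::finite + 'n::finite) set). f k)"
  by (simp add: sum_UNIV_Plus add.commute)

lemma unitary_dual:
  fixes U :: "complex^('m::finite + 'n::finite)^('m + 'n)"
  assumes "unitary U"
  shows "unitary (dual U)"
proof -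
  let ?s = "case_sum Inr Inl"
  have "(dual U ** cadj (dual U)) $ i $ j = (cadj U ** U) $ ?s i $ ?s j" for i j
    using sum_UNIV_Plus_swap[of "\<lambda>k. cnj (U $ k $ ?s i) * U $ k $ ?s j"]
    by (simp add: matrix_matrix_mult_def dual_nth cadj_def)
  moreover have "(cadj (dual U) ** dual U) $ i $ j = (U ** cadj U) $ ?s i $ ?s j" for i j
    using sum_UNIV_Plus_swap[of "\<lambda>k. U $ ?s i $ k * cnj (U $ ?s j $ k)"]
    by (simp add: matrix_matrix_mult_def dual_nth cadj_def mult.commute)
  moreover have "(mat 1 :: complex^('m + 'n)^('m + 'n)) $ ?s i $ ?s j = mat 1 $ i $ j" for i j
    by (simp add: mat_def split: sum.split)
  ultimately show ?thesis
    using assms by (simp add: unitary_def vec_eq_iff)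
qed

lemma dual_mult_join_eq_iff:
  "dual U *v join y x = join y' x' \<longleftrightarrow> cadj U *v join x y = join x' y'"
  by (auto simp: blk_dual matrix_vector_mult_join blk_cadj add.commute)

lemma kernel_point_dual:
  assumes "unitary U"
  shows "kernel_point (dual U) w z \<longleftrightarrow> kernel_point U z w"
  unfolding kernel_point_def dual_mult_join_eq_iff unitary_mult_eq_iff[OF assms, symmetric]
  by blast

lemma det_dual_transfer_function_eq_0_iff:
  assumes "unitary U" "cmod w < 1"
  shows "det (cadj (blkD U) + mat w ** cadj (blkB U) ** matrix_inv (mat 1 - mat w ** cadj (blkA U))
      ** cadj (blkC U) - mat z) = 0 \<longleftrightarrow> kernel_point U z w"
  using det_transfer_function_eq_0_iff[OF unitary_dual[OF assms(1)] assms(2), of z]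
  by (simp add: blk_dual kernel_point_dual[OF assms(1)])

lemma poly2_eq_poly_poly: "poly2 p z w = poly (poly p [:w:]) z"
  by (induction p) (simp_all add: poly2_def map_poly_pCons)

definition bivariate_polynomial :: "(complex \<Rightarrow> complex \<Rightarrow> complex) \<Rightarrow> bool" where
  "bivariate_polynomial f \<longleftrightarrow> (\<exists>p. \<forall>z w. f z w = poly2 p z w)"

lemma bivariate_polynomial_const: "bivariate_polynomial (\<lambda>z w. c)"
  unfolding bivariate_polynomial_def poly2_eq_poly_poly by (rule exI[of _ "[:[:c:]:]"]) simp

lemma bivariate_polynomial_fst: "bivariate_polynomial (\<lambda>z w. z)"
  unfolding bivariate_polynomial_def poly2_eq_poly_poly by (rule exI[of _ "[:[:0, 1:]:]"]) simp

lemma bivariate_polynomial_snd: "bivariate_polynomial (\<lambda>z w. w)"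
  unfolding bivariate_polynomial_def poly2_eq_poly_poly by (rule exI[of _ "[:0, 1:]"]) simp

lemma bivariate_polynomial_diff:
  "bivariate_polynomial f \<Longrightarrow> bivariate_polynomial g \<Longrightarrow> bivariate_polynomial (\<lambda>z w. f z w - g z w)"
  unfolding bivariate_polynomial_def poly2_eq_poly_poly by (metis poly_diff)

lemma bivariate_polynomial_mult:
  "bivariate_polynomial f \<Longrightarrow> bivariate_polynomial g \<Longrightarrow> bivariate_polynomial (\<lambda>z w. f z w * g z w)"
  unfolding bivariate_polynomial_def poly2_eq_poly_poly by (metis poly_mult)

lemma bivariate_polynomial_sum:
  assumes "\<And>i. i \<in> A \<Longrightarrow> bivariate_polynomial (f i)"
  shows "bivariate_polynomial (\<lambda>z w. \<Sum>i\<in>A. f i z w)"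
proof -
  obtain p where "\<forall>i\<in>A. \<forall>z w. f i z w = poly2 (p i) z w"
    using assms unfolding bivariate_polynomial_def by metis
  then have "(\<Sum>i\<in>A. f i z w) = poly2 (\<Sum>i\<in>A. p i) z w" for z w
    by (simp add: poly2_eq_poly_poly poly_sum)
  then show ?thesis
    unfolding bivariate_polynomial_def by blast
qed

lemma bivariate_polynomial_prod:
  assumes "\<And>i. i \<in> A \<Longrightarrow> bivariate_polynomial (f i)"
  shows "bivariate_polynomial (\<lambda>z w. \<Prod>i\<in>A. f i z w)"
proof -
  obtain p where "\<forall>i\<in>A. \<forall>z w. f i z w = poly2 (p i) z w"
    using assms unfolding bivariate_polynomial_def by metis
  then have "(\<Prod>i\<in>A. f i z w) = poly2 (\<Prod>i\<in>A. p i) z w" for z w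
    by (simp add: poly2_eq_poly_poly poly_prod)
  then show ?thesis
    unfolding bivariate_polynomial_def by blast
qed

lemma bivariate_polynomial_det:
  assumes "\<And>i j. bivariate_polynomial (\<lambda>z w. M z w $ i $ j)"
  shows "bivariate_polynomial (\<lambda>z w. det (M z w))"
  unfolding det_def
  by (intro bivariate_polynomial_sum bivariate_polynomial_mult bivariate_polynomial_prod
      bivariate_polynomial_const assms)

lemma bivariate_polynomial_det_pencil:
  "bivariate_polynomial
     (\<lambda>z w. det (block (blkA U - mat w) (mat z ** blkB U) (blkC U) (mat z ** blkD U - mat 1)))"
proof (rule bivariate_polynomial_det)
  have mat_nth: "mat c $ a $ b = of_bool (a = b) * c" for c :: complex and a b :: "'a::finite"
    by (simp add: mat_def)
  fix i j
  show "bivariate_polynomial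
      (\<lambda>z w. block (blkA U - mat w) (mat z ** blkB U) (blkC U) (mat z ** blkD U - mat 1) $ i $ j)"
    by (cases i; cases j)
      (auto simp: block_def mat_mult_nth mat_nth
        intro!: bivariate_polynomial_diff bivariate_polynomial_mult bivariate_polynomial_const
          bivariate_polynomial_fst bivariate_polynomial_snd)
qed

lemma tendsto_matrix_vector_mult [tendsto_intros]:
  "(f \<longlongrightarrow> x) F \<Longrightarrow> ((\<lambda>k. M *v f k) \<longlongrightarrow> M *v (x :: 'a::real_normed_algebra_1^_)) F"
  unfolding matrix_vector_mult_def
  by (rule vec_tendstoI) (simp add: tendsto_sum tendsto_mult tendsto_vec_nth)

lemma tendsto_vector_smult [tendsto_intros]:
  "(c \<longlongrightarrow> a) F \<Longrightarrow> (f \<longlongrightarrow> x) F \<Longrightarrow> ((\<lambda>k. c k *s f k) \<longlongrightarrow> a *s (x :: 'a::real_normed_algebra_1^_)) F"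
  by (rule vec_tendstoI) (simp add: tendsto_mult tendsto_vec_nth)

lemma tendsto_cinner_left [tendsto_intros]:
  "(f \<longlongrightarrow> x) F \<Longrightarrow> ((\<lambda>k. cinner (f k) y) \<longlongrightarrow> cinner x y) F"
  unfolding cinner_def by (simp add: tendsto_sum tendsto_mult tendsto_vec_nth)

lemma kernel_equation_norms:
  assumes "unitary U" "U *v join x (z *s y) = join (w *s x) y"
  shows "(1 - (cmod w)\<^sup>2) * (norm x)\<^sup>2 = (1 - (cmod z)\<^sup>2) * (norm y)\<^sup>2"
proof -
  have "norm (x, z *s y) = norm (w *s x, y)"
    using unitary_norm[OF assms(1)] assms(2) by (metis norm_join)
  then have "(norm x)\<^sup>2 + (cmod z * norm y)\<^sup>2 = (cmod w * norm x)\<^sup>2 + (norm y)\<^sup>2"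
    by (simp add: norm_Pair norm_vector_smult)
  then show ?thesis
    by (simp add: algebra_simps)
qed

lemma kernel_point_unit_vector:
  assumes "kernel_point U z w"
  obtains x y where "norm (x, y) = 1" "U *v join x (z *s y) = join (w *s x) y"
proof -
  obtain x y where "x \<noteq> 0 \<or> y \<noteq> 0" and eq: "U *v join x (z *s y) = join (w *s x) y"
    using assms kernel_point_def by blast
  then have "norm (x, y) \<noteq> 0"
    by (simp add: zero_prod_def)
  define c where "c = complex_of_real (1 / norm (x, y))"
  have "norm (c *s x, c *s y) = cmod c * norm (x, y)"
    by (metis join_smult norm_join norm_vector_smult)
  also have "\<dots> = 1"
    using \<open>norm (x, y) \<noteq> 0\<close> by (simp add: c_def norm_divide)
  finally have "norm (c *s x, c *s y) = 1" .
  moreover have "U *v join (c *s x) (z *s (c *s y)) = join (w *s (c *s x)) (c *s y)"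
  proof -
    have "U *v join (c *s x) (z *s (c *s y)) = c *s (U *v join x (z *s y))"
      by (simp only: vector_smult_commute[of z c] join_smult[symmetric] matrix_vector_mult_smult)
    also have "\<dots> = join (w *s (c *s x)) (c *s y)"
      by (simp only: eq join_smult vector_smult_commute[of w c])
    finally show ?thesis .
  qed
  ultimately show ?thesis
    using that by blast
qed

lemma kernel_point_limit_solution:
  fixes U :: "complex^('m::finite + 'n::finite)^('m + 'n)"
  assumes kernel: "\<And>k. kernel_point U (zs k) (ws k)"
    and zs_lim: "zs \<longlonglongrightarrow> z0" and ws_lim: "ws \<longlonglongrightarrow> w0"
  obtains xs ys r l1 l2
  where "\<And>k. U *v join (xs k) (zs k *s ys k) = join (ws k *s xs k) (ys k)"
    and "strict_mono r" "(\<lambda>k. xs (r k)) \<longlonglongrightarrow> l1"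
    and "norm (l1, l2) = 1" "U *v join l1 (z0 *s l2) = join (w0 *s l1) l2"
proof -
  have "\<forall>k. \<exists>v. v \<in> sphere 0 1 \<and> U *v join (fst v) (zs k *s snd v) = join (ws k *s fst v) (snd v)"
    using kernel_point_unit_vector[OF kernel] by (metis fst_conv snd_conv mem_sphere_0)
  then obtain v where "\<forall>k. v k \<in> sphere 0 1"
    and eq: "\<And>k. U *v join (fst (v k)) (zs k *s snd (v k)) = join (ws k *s fst (v k)) (snd (v k))"
    by metis
  then obtain l r where "l \<in> sphere 0 1" "strict_mono r" and lim: "(v \<circ> r) \<longlonglongrightarrow> l"
    by (metis seq_compactE[OF compact_imp_seq_compact[OF compact_sphere]])
  have xs_lim: "(\<lambda>k. fst (v (r k))) \<longlonglongrightarrow> fst l" and ys_lim: "(\<lambda>k. snd (v (r k))) \<longlonglongrightarrow> snd l"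
    using tendsto_fst[OF lim] tendsto_snd[OF lim] by (simp_all add: comp_def)
  have "(\<lambda>k. zs (r k)) \<longlonglongrightarrow> z0" "(\<lambda>k. ws (r k)) \<longlonglongrightarrow> w0"
    using LIMSEQ_subseq_LIMSEQ[OF _ \<open>strict_mono r\<close>] zs_lim ws_lim by (simp_all add: comp_def)
  then have "(\<lambda>k. U *v join (fst (v (r k))) (zs (r k) *s snd (v (r k))))
      \<longlonglongrightarrow> U *v join (fst l) (z0 *s snd l)"
    and "(\<lambda>k. join (ws (r k) *s fst (v (r k))) (snd (v (r k)))) \<longlonglongrightarrow> join (w0 *s fst l) (snd l)"
    using xs_lim ys_lim
    by (auto intro!: tendsto_matrix_vector_mult tendsto_join tendsto_vector_smult)
  then have "U *v join (fst l) (z0 *s snd l) = join (w0 *s fst l) (snd l)"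
    by (simp add: eq LIMSEQ_unique)
  with that[of "fst \<circ> v" "snd \<circ> v" r "fst l" "snd l"] show ?thesis
    using eq \<open>strict_mono r\<close> xs_lim \<open>l \<in> sphere 0 1\<close> by simp
qed

lemma kernel_point_limit:
  fixes U :: "complex^('m::finite + 'n::finite)^('m + 'n)"
  assumes U: "unitary U"
    and kernel: "\<And>k. kernel_point U (zs k) (ws k)" and ws: "\<And>k. cmod (ws k) < 1"
    and "zs \<longlonglongrightarrow> z0" "ws \<longlonglongrightarrow> w0" "cmod z0 < 1"
  shows "cmod w0 \<noteq> 1"
proof
  assume "cmod w0 = 1"
  obtain xs ys r l1 l2
    where eq: "\<And>k. U *v join (xs k) (zs k *s ys k) = join (ws k *s xs k) (ys k)"
      and "strict_mono r" and xs_lim: "(\<lambda>k. xs (r k)) \<longlonglongrightarrow> l1"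
      and "norm (l1, l2) = 1" and limit_eq: "U *v join l1 (z0 *s l2) = join (w0 *s l1) l2"
    using kernel_point_limit_solution[OF kernel \<open>zs \<longlonglongrightarrow> z0\<close> \<open>ws \<longlonglongrightarrow> w0\<close>] by blast
  have "(1 - (cmod z0)\<^sup>2) * (norm l2)\<^sup>2 = 0"
    using kernel_equation_norms[OF U limit_eq] \<open>cmod w0 = 1\<close> by simp
  moreover have "(cmod z0)\<^sup>2 < 1"
    using \<open>cmod z0 < 1\<close> by (simp add: abs_square_less_1)
  ultimately have "l2 = 0"
    by simp
  then have eigen: "U *v join l1 0 = w0 *s join l1 0" and "norm l1 = 1"
    using limit_eq \<open>norm (l1, l2) = 1\<close> by (simp_all add: join_smult norm_Pair)
  have "cinner (xs k) l1 = 0" for k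
  proof -
    have "ws k * cinner (xs k) l1 = w0 * cinner (xs k) l1"
      using unitary_cinner_eigenvector[OF U eigen \<open>cmod w0 = 1\<close>, of "join (xs k) (zs k *s ys k)"]
      by (simp add: eq cinner_join cinner_smult_left)
    moreover have "ws k \<noteq> w0"
      using ws[of k] \<open>cmod w0 = 1\<close> by auto
    ultimately show ?thesis
      by simp
  qed
  moreover have "(\<lambda>k. cinner (xs (r k)) l1) \<longlonglongrightarrow> cinner l1 l1"
    using xs_lim by (rule tendsto_cinner_left)
  ultimately have "cinner l1 l1 = 0"
    by (simp add: LIMSEQ_const_iff)
  then show False
    using \<open>norm l1 = 1\<close> by (simp add: cinner_self)
qed

lemma closure_kernel_variety_frontier:
  fixes U :: "complex^('m::finite + 'n::finite)^('m + 'n)"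
  assumes U: "unitary U"
  defines "V \<equiv> {(z, w). (z, w) \<in> bidisk \<and> kernel_point U z w}"
  shows "closure V \<inter> frontier bidisk = closure V \<inter> (sphere 0 1 \<times> sphere 0 1)"
proof -
  have frontier_bidisk: "frontier bidisk = cball 0 1 \<times> cball 0 1 - bidisk"
    unfolding frontier_def closure_Times interior_open[OF open_Times[OF open_ball open_ball]]
    by simp
  have "q \<in> sphere 0 1 \<times> sphere 0 1" if "q \<in> closure V" "q \<in> frontier bidisk" for q
  proof -
    obtain s where s: "\<And>k. s k \<in> V" and s_lim: "s \<longlonglongrightarrow> q"
      using \<open>q \<in> closure V\<close> unfolding closure_sequential by blast
    obtain z0 w0 where q: "q = (z0, w0)"
      by fastforce
    define zs where "zs = fst \<circ> s"
    define ws where "ws = snd \<circ> s"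
    have kernel: "kernel_point U (zs k) (ws k)" and "cmod (zs k) < 1" "cmod (ws k) < 1" for k
      using s[of k] by (auto simp: V_def zs_def ws_def split: prod.splits)
    moreover have "zs \<longlonglongrightarrow> z0" "ws \<longlonglongrightarrow> w0"
      using tendsto_fst[OF s_lim] tendsto_snd[OF s_lim] by (simp_all add: q zs_def ws_def comp_def)
    moreover have "kernel_point (dual U) (ws k) (zs k)" for k
      using kernel kernel_point_dual[OF U] by blast
    ultimately have "cmod z0 < 1 \<Longrightarrow> cmod w0 \<noteq> 1" "cmod w0 < 1 \<Longrightarrow> cmod z0 \<noteq> 1"
      using kernel_point_limit[OF U] kernel_point_limit[OF unitary_dual[OF U]] by blast+
    then show ?thesis
      using \<open>q \<in> frontier bidisk\<close> by (auto simp: q frontier_bidisk order_le_less)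
  qed
  moreover have "sphere 0 1 \<times> sphere 0 1 \<subseteq> frontier bidisk"
    by (auto simp: frontier_bidisk)
  ultimately show ?thesis
    by blast
qed

theorem mainTheorem4:
  fixes U :: "complex^('m::finite + 'n::finite)^('m + 'n)"
    and V :: "(complex \<times> complex) set"
  assumes "unitary U"
    and "V = {(z, w). (z, w) \<in> bidisk \<and>
           det (blkA U + mat z ** blkB U ** matrix_inv (mat 1 - mat z ** blkD U) ** blkC U
                - mat w) = 0}"
  shows "V = {(z, w). (z, w) \<in> bidisk \<and>
           det (cadj (blkD U) + mat w ** cadj (blkB U) ** matrix_inv (mat 1 - mat w ** cadj (blkA U))
                ** cadj (blkC U) - mat z) = 0}
       \<and> V = {(z, w). (z, w) \<in> bidisk \<and>
           det (block (blkA U - mat w) (mat z ** blkB U) (blkC U) (mat z ** blkD U - mat 1)) = 0}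
       \<and> (V \<noteq> {} \<longrightarrow> distinguished_variety V)"
proof -
  have V: "V = {(z, w). (z, w) \<in> bidisk \<and> kernel_point U z w}"
    using assms det_transfer_function_eq_0_iff by auto
  have pencil: "V = {(z, w). (z, w) \<in> bidisk \<and>
      det (block (blkA U - mat w) (mat z ** blkB U) (blkC U) (mat z ** blkD U - mat 1)) = 0}"
    using V det_pencil_eq_0_iff[of U] by auto
  obtain p where p: "\<And>z w. det (block (blkA U - mat w) (mat z ** blkB U) (blkC U)
      (mat z ** blkD U - mat 1)) = poly2 p z w"
    using bivariate_polynomial_det_pencil unfolding bivariate_polynomial_def by blast
  from pencil have polynomial: "V = {(z, w). (z, w) \<in> bidisk \<and> poly2 p z w = 0}"
    by (simp add: p)
  have "closure V \<inter> frontier bidisk = closure V \<inter> (sphere 0 1 \<times> sphere 0 1)"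
    using V closure_kernel_variety_frontier[OF assms(1)] by simp
  with polynomial have "V \<noteq> {} \<longrightarrow> distinguished_variety V"
    unfolding distinguished_variety_def by blast
  then show ?thesis
    using V pencil det_dual_transfer_function_eq_0_iff[OF assms(1)] by auto
qed

end
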